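(* For every integer $n\ge2$ and every prime power $q$, $$f(n,q)\ge\frac{(q^{n+1}-1)(q^{n-1}-1)}{(q^2-1)^2}.$$
   Context: $f(n,q)$ is the smallest size of a set of lines of $\mathrm{PG}(n,q)$ (the $n$-dimensional projective space over $\mathbb F_q$) such that every plane contains at least one line of the set. *)

theory Defs
  imports "HOL-Analysis.Analysis"
begin

text \<open>PG(n,F) is modelled via the vector space F^(n+1) = 'a^'n with CARD('n) = n+1.
  Projective lines are 2-dimensional linear subspaces, projective planes are
  3-dimensional linear subspaces; incidence is inclusion.\<close>

definition pg_lines :: "('a::field ^ 'n) set set" where
  "pg_lines = {l. vec.subspace l \<and> vec.dim l = 2}"

definition pg_planes :: "('a::field ^ 'n) set set" where
  "pg_planes = {p. vec.subspace p \<and> vec.dim p = 3}"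

definition f_PG :: "'a::{field,finite} itself \<Rightarrow> 'n::finite itself \<Rightarrow> nat" where
  "f_PG _ _ = (LEAST k. \<exists>L. L \<subseteq> (pg_lines :: ('a ^ 'n) set set) \<and>
       (\<forall>P\<in>(pg_planes :: ('a ^ 'n) set set). \<exists>l\<in>L. l \<subseteq> P) \<and> card L = k)"

end

theory Submission
  imports Defs
begin

text \<open>Let \<open>L\<close> be a set of lines such that every plane contains one of them, let \<open>c(\<pi>)\<close> be
  the number of lines of \<open>L\<close> in the plane \<open>\<pi>\<close> and \<open>d(v)\<close> the number of lines of \<open>L\<close>
  through the nonzero vector \<open>v\<close>. Since \<open>1 \<le> c(\<pi>) \<le> q\<^sup>2 + q + 1\<close>, summing
  \<open>(c(\<pi>) - 1)(q\<^sup>2 + q + 1 - c(\<pi>)) \<ge> 0\<close> over all planes bounds \<open>\<Sum> c(\<pi>)(c(\<pi>) - 1)\<close> from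
  above by a linear function of \<open>|L|\<close>. Two distinct lines through a common point span a plane,
  so \<open>\<Sum> d(v)(d(v) - 1) \<le> (q - 1) \<Sum> c(\<pi>)(c(\<pi>) - 1)\<close>; as \<open>\<Sum> d(v) = |L|(q\<^sup>2 - 1)\<close>, the
  Cauchy-Schwarz inequality bounds the left-hand side from below by a quadratic in \<open>|L|\<close>.
  The resulting quadratic inequality forces \<open>|L|\<close> to be at least its smaller root, which is
  the claimed bound.\<close>

section \<open>Counting subspaces of a finite vector space\<close>

lemma card_subspace:
  fixes S :: "('a::{field,finite} ^ 'n) set"
  assumes "vec.subspace S"
  shows "card S = CARD('a) ^ vec.dim S"
proof -
  obtain B where B: "B \<subseteq> S" "vec.independent B" "S \<subseteq> vec.span B" "card B = vec.dim S"
    using vec.basis_exists by blast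
  let ?comb = "\<lambda>u. \<Sum>v\<in>B. u v *s v"
  have fin: "finite B" by simp
  have comb_restrict: "?comb u = ?comb (restrict u B)" for u
    by (rule sum.cong) auto
  have "S = vec.span B"
    using B assms by (metis vec.span_subspace)
  also have "\<dots> = ?comb ` (B \<rightarrow>\<^sub>E UNIV)"
  proof
    show "vec.span B \<subseteq> ?comb ` (B \<rightarrow>\<^sub>E UNIV)"
    proof
      fix x assume "x \<in> vec.span B"
      then obtain u where "x = ?comb u"
        unfolding vec.span_finite[OF fin] by blast
      then show "x \<in> ?comb ` (B \<rightarrow>\<^sub>E UNIV)"
        using comb_restrict by (intro image_eqI[of _ _ "restrict u B"]) auto
    qed
  qed (unfold vec.span_finite[OF fin], blast)
  finally have S: "S = ?comb ` (B \<rightarrow>\<^sub>E UNIV)" .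
  have "inj_on ?comb (B \<rightarrow>\<^sub>E UNIV)"
  proof (rule inj_onI)
    fix u w assume u: "u \<in> B \<rightarrow>\<^sub>E UNIV" and w: "w \<in> B \<rightarrow>\<^sub>E UNIV" and eq: "?comb u = ?comb w"
    have comb_diff: "(\<Sum>v\<in>B. (u v - w v) *s v) = 0"
      using eq by (simp add: vec.scale_left_diff_distrib sum_subtractf)
    have "u v = w v" if "v \<in> B" for v
    proof (rule ccontr)
      assume "u v \<noteq> w v"
      then have "vec.dependent B"
        unfolding vec.dependent_finite[OF fin] using that comb_diff
        by (intro exI[of _ "\<lambda>v. u v - w v"]) auto
      then show False using B(2) by simp
    qed
    then show "u = w"
      by (rule PiE_ext[OF u w])
  qed
  then have "card S = card (B \<rightarrow>\<^sub>E (UNIV :: 'a set))"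
    unfolding S by (rule card_image)
  then show ?thesis
    using B(4) by (simp add: card_PiE)
qed

lemma dim_span_insert_notin:
  fixes S :: "('a::field ^ 'n) set"
  assumes "vec.subspace S" "w \<notin> S"
  shows "vec.dim (vec.span (insert w S)) = vec.dim S + 1"
  using assms vec.dim_insert[of w S] vec.span_eq_iff[THEN iffD2, OF assms(1)] by simp

definition independent_lists :: "('a::field ^ 'n) set \<Rightarrow> nat \<Rightarrow> ('a ^ 'n) list set" where
  "independent_lists W k =
     {xs. length xs = k \<and> distinct xs \<and> set xs \<subseteq> W \<and> vec.independent (set xs)}"

lemma finite_independent_lists: "finite (independent_lists (W :: ('a::{field,finite} ^ 'n) set) k)"
proof (rule finite_subset)
  show "independent_lists W k \<subseteq> {xs. set xs \<subseteq> UNIV \<and> length xs = k}"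
    unfolding independent_lists_def by auto
qed (rule finite_lists_length_eq, simp)

lemma independent_lists_Suc:
  fixes W :: "('a::field ^ 'n) set"
  shows "independent_lists W (Suc k)
           = (\<lambda>(xs, v). v # xs) ` (SIGMA xs:independent_lists W k. W - vec.span (set xs))"
proof (intro equalityI subsetI)
  fix ys assume "ys \<in> independent_lists W (Suc k)"
  then obtain v xs where ys: "ys = v # xs" and l: "length xs = k" and d: "distinct (v # xs)"
    and s: "set (v # xs) \<subseteq> W" and i: "vec.independent (insert v (set xs))"
    unfolding independent_lists_def by (cases ys) auto
  then have "vec.independent (set xs)" "v \<notin> vec.span (set xs)"
    using vec.independent_insert[of v "set xs"] by auto
  then show "ys \<in> (\<lambda>(xs, v). v # xs) ` (SIGMA xs:independent_lists W k. W - vec.span (set xs))"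
    using ys l d s unfolding independent_lists_def by force
next
  fix ys assume "ys \<in> (\<lambda>(xs, v). v # xs) ` (SIGMA xs:independent_lists W k. W - vec.span (set xs))"
  then obtain xs v where ys: "ys = v # xs" and xs: "xs \<in> independent_lists W k"
    and v: "v \<in> W" "v \<notin> vec.span (set xs)"
    by auto
  then have "v \<notin> set xs" using vec.span_base by blast
  then show "ys \<in> independent_lists W (Suc k)"
    using xs v ys vec.independent_insert[of v "set xs"] unfolding independent_lists_def by auto
qed

lemma span_independent_list:
  fixes W :: "('a::field ^ 'n) set"
  assumes "vec.subspace W" "xs \<in> independent_lists W k"
  shows "vec.span (set xs) \<subseteq> W" "vec.dim (vec.span (set xs)) = k"
  using assms vec.span_minimal[of "set xs" W]
  by (auto simp: independent_lists_def vec.dim_eq_card_independent distinct_card)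

lemma card_independent_lists:
  fixes W :: "('a::{field,finite} ^ 'n) set"
  assumes "vec.subspace W"
  shows "card (independent_lists W k) = (\<Prod>i<k. CARD('a) ^ vec.dim W - CARD('a) ^ i)"
proof (induction k)
  case 0
  have "independent_lists W 0 = {[]}"
    unfolding independent_lists_def using vec.independent_empty by auto
  then show ?case by simp
next
  case (Suc k)
  let ?q = "CARD('a)"
  have inj: "inj_on (\<lambda>(xs, v). v # xs) (SIGMA xs:independent_lists W k. W - vec.span (set xs))"
    by (auto simp: inj_on_def)
  have "card (independent_lists W (Suc k))
          = card (SIGMA xs:independent_lists W k. W - vec.span (set xs))"
    unfolding independent_lists_Suc using card_image[OF inj] .
  also have "\<dots> = (\<Sum>xs\<in>independent_lists W k. card (W - vec.span (set xs)))"
    by (rule card_SigmaI) (auto simp: finite_independent_lists)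
  also have "\<dots> = (\<Sum>xs\<in>independent_lists W k. ?q ^ vec.dim W - ?q ^ k)"
  proof (rule sum.cong[OF refl])
    fix xs assume "xs \<in> independent_lists W k"
    then have "vec.span (set xs) \<subseteq> W" "card (vec.span (set xs)) = ?q ^ k"
      using span_independent_list[OF assms] card_subspace[of "vec.span (set xs)"] by auto
    then show "card (W - vec.span (set xs)) = ?q ^ vec.dim W - ?q ^ k"
      by (simp add: card_Diff_subset card_subspace[OF assms])
  qed
  finally show ?case using Suc by simp
qed

definition subspaces_of_dim :: "('a::field ^ 'n) set \<Rightarrow> nat \<Rightarrow> ('a ^ 'n) set set" where
  "subspaces_of_dim W k = {X. vec.subspace X \<and> X \<subseteq> W \<and> vec.dim X = k}"

text \<open>Double counting: every independent list of length \<open>k\<close> in \<open>W\<close> is an ordered basis of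
  exactly one \<open>k\<close>-dimensional subspace of \<open>W\<close>.\<close>

lemma card_subspaces_of_dim:
  fixes W :: "('a::{field,finite} ^ 'n) set"
  assumes "vec.subspace W"
  shows "card (subspaces_of_dim W k) * (\<Prod>i<k. CARD('a) ^ k - CARD('a) ^ i)
           = (\<Prod>i<k. CARD('a) ^ vec.dim W - CARD('a) ^ i)"
proof -
  have span_eq: "vec.span (set xs) = X" if "X \<in> subspaces_of_dim W k" "xs \<in> independent_lists X k" for X xs
    using that span_independent_list[of X xs k]
    by (intro vec.subspace_dim_equal) (auto simp: subspaces_of_dim_def)
  have "independent_lists W k = (\<Union>X\<in>subspaces_of_dim W k. independent_lists X k)"
  proof (intro equalityI subsetI)
    fix xs assume xs: "xs \<in> independent_lists W k"
    then have "vec.span (set xs) \<in> subspaces_of_dim W k"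
      using span_independent_list[OF assms] by (simp add: subspaces_of_dim_def)
    moreover have "xs \<in> independent_lists (vec.span (set xs)) k"
      using xs unfolding independent_lists_def by (auto intro: vec.span_base)
    ultimately show "xs \<in> (\<Union>X\<in>subspaces_of_dim W k. independent_lists X k)" by blast
  qed (auto simp: independent_lists_def subspaces_of_dim_def)
  moreover have "\<forall>X\<in>subspaces_of_dim W k. \<forall>Y\<in>subspaces_of_dim W k.
                   X \<noteq> Y \<longrightarrow> independent_lists X k \<inter> independent_lists Y k = {}"
    using span_eq by blast
  ultimately have "card (independent_lists W k)
                     = (\<Sum>X\<in>subspaces_of_dim W k. card (independent_lists X k))"
    by (simp add: card_UN_disjoint finite_independent_lists)
  also have "\<dots> = (\<Sum>X\<in>subspaces_of_dim W k. \<Prod>i<k. CARD('a) ^ k - CARD('a) ^ i)"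
    by (rule sum.cong[OF refl]) (simp add: card_independent_lists subspaces_of_dim_def)
  finally show ?thesis
    using card_independent_lists[OF assms, of k] by simp
qed

lemma card_superspaces_Suc_dim:
  fixes U :: "('a::{field,finite} ^ 'n) set"
  assumes U: "vec.subspace U" "vec.dim U = j"
  shows "card {P. vec.subspace P \<and> vec.dim P = j + 1 \<and> U \<subseteq> P} * (CARD('a) ^ (j + 1) - CARD('a) ^ j)
           = CARD('a) ^ CARD('n) - CARD('a) ^ j"
proof -
  let ?q = "CARD('a)"
  let ?H = "{P. vec.subspace P \<and> vec.dim P = j + 1 \<and> U \<subseteq> P}"
  have span_eq: "vec.span (insert w U) = P" if "P \<in> ?H" "w \<in> P - U" for P w
    using that U dim_span_insert_notin[OF U(1), of w] vec.span_minimal[of "insert w U" P]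
    by (intro vec.subspace_dim_equal) auto
  have cover: "UNIV - U = (\<Union>P\<in>?H. P - U)"
  proof (intro equalityI subsetI)
    fix w assume w: "w \<in> UNIV - U"
    have "vec.span (insert w U) \<in> ?H"
      using dim_span_insert_notin[OF U(1), of w] w U vec.span_superset[of "insert w U"] by auto
    moreover have "w \<in> vec.span (insert w U) - U"
      using w vec.span_base[of w "insert w U"] by auto
    ultimately show "w \<in> (\<Union>P\<in>?H. P - U)" by blast
  qed auto
  have "\<forall>P\<in>?H. \<forall>P'\<in>?H. P \<noteq> P' \<longrightarrow> (P - U) \<inter> (P' - U) = {}"
    using span_eq by blast
  then have "card (UNIV - U) = (\<Sum>P\<in>?H. card (P - U))"
    unfolding cover by (intro card_UN_disjoint) auto
  also have "\<dots> = (\<Sum>P\<in>?H. ?q ^ (j + 1) - ?q ^ j)"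
  proof (rule sum.cong[OF refl])
    fix P assume "P \<in> ?H"
    then show "card (P - U) = ?q ^ (j + 1) - ?q ^ j"
      using card_subspace[of P] card_subspace[OF U(1)] U by (simp add: card_Diff_subset)
  qed
  finally show ?thesis
    using card_Diff_subset[of U UNIV] card_subspace[OF U(1)] U by (simp add: mult.commute)
qed

lemma two_le_card_field: "2 \<le> CARD('a::{field,finite})"
proof -
  have "card {0::'a, 1} \<le> CARD('a)" by (rule card_mono) auto
  then show ?thesis by simp
qed

lemma of_nat_power_diff:
  assumes "1 \<le> q" "i \<le> k"
  shows "(of_nat (q ^ k - q ^ i) :: 'b::comm_ring_1) = of_nat q ^ k - of_nat q ^ i"
  using assms by (simp add: power_increasing)

lemma real_card_subspaces_of_dim:
  fixes W :: "('a::{field,finite} ^ 'n) set"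
  assumes "vec.subspace W" "k \<le> vec.dim W"
  shows "real (card (subspaces_of_dim W k)) * (\<Prod>i<k. real CARD('a) ^ k - real CARD('a) ^ i)
           = (\<Prod>i<k. real CARD('a) ^ vec.dim W - real CARD('a) ^ i)"
proof -
  have of_nat_prod_diff:
    "real (\<Prod>i<k. CARD('a) ^ m - CARD('a) ^ i) = (\<Prod>i<k. real CARD('a) ^ m - real CARD('a) ^ i)"
    if "k \<le> m" for m
    using that two_le_card_field[where 'a='a] by (auto simp: of_nat_power_diff intro!: prod.cong)
  show ?thesis
    using arg_cong[OF card_subspaces_of_dim[OF assms(1), of k], of real] assms(2)
    by (simp only: of_nat_mult of_nat_prod_diff order_refl)
qed

section \<open>Lines and planes\<close>

lemma card_lines_in_plane:
  fixes P :: "('a::{field,finite} ^ 'n) set"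
  assumes "P \<in> pg_planes"
  shows "card {l \<in> pg_lines. l \<subseteq> P} = CARD('a) ^ 2 + CARD('a) + 1"
proof -
  define Q where "Q = real CARD('a)"
  have Q: "Q \<ge> 2" unfolding Q_def using two_le_card_field[where 'a='a] by simp
  have P: "vec.subspace P" "vec.dim P = 3" using assms by (auto simp: pg_planes_def)
  have lines: "{l \<in> pg_lines. l \<subseteq> P} = subspaces_of_dim P 2"
    by (auto simp: pg_lines_def subspaces_of_dim_def)
  have "real (card {l \<in> pg_lines. l \<subseteq> P}) * ((Q^2 - 1) * (Q^2 - Q)) = (Q^3 - 1) * (Q^3 - Q)"
    using real_card_subspaces_of_dim[OF P(1), of 2] P(2) unfolding lines Q_def
    by (simp add: lessThan_nat_numeral mult_ac)
  also have "\<dots> = (Q^2 + Q + 1) * ((Q^2 - 1) * (Q^2 - Q))" by algebra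
  moreover have "(Q^2 - 1) * (Q^2 - Q) \<noteq> 0"
  proof -
    have "(Q^2 - 1) * (Q^2 - Q) = (Q + 1) * Q * (Q - 1)^2" by algebra
    then show ?thesis using Q by simp
  qed
  ultimately have "real (card {l \<in> pg_lines. l \<subseteq> P}) = Q^2 + Q + 1"
    by simp
  then have "real (card {l \<in> pg_lines. l \<subseteq> P}) = real (CARD('a) ^ 2 + CARD('a) + 1)"
    unfolding Q_def by simp
  then show ?thesis by (rule of_nat_eq_iff[THEN iffD1])
qed

lemma power_split_two:
  fixes Q :: real
  assumes "n \<ge> 2"
  shows "Q ^ (n + 1) = Q^2 * Q ^ (n - 1)" "Q ^ n = Q * Q ^ (n - 1)"
proof -
  have "n + 1 = 2 + (n - 1)" "n = Suc (n - 1)" using assms by simp_all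
  then show "Q ^ (n + 1) = Q^2 * Q ^ (n - 1)" "Q ^ n = Q * Q ^ (n - 1)"
    by (metis power_add, metis power_Suc)
qed

lemma real_card_planes_through_line:
  fixes l :: "('a::{field,finite} ^ 'n) set"
  assumes "l \<in> pg_lines" "CARD('n) = n + 1"
  shows "real (card {P \<in> pg_planes. l \<subseteq> P}) * (real CARD('a) - 1) = real CARD('a) ^ (n - 1) - 1"
proof -
  define Q where "Q = real CARD('a)"
  have q: "1 \<le> CARD('a)" using two_le_card_field[where 'a='a] by simp
  have Q: "Q \<ge> 2" unfolding Q_def using two_le_card_field[where 'a='a] by simp
  have l: "vec.subspace l" "vec.dim l = 2" using assms(1) by (auto simp: pg_lines_def)
  have "vec.dim l \<le> vec.dim (UNIV :: ('a ^ 'n) set)" by (rule vec.dim_subset) simp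
  then have n1: "2 \<le> n + 1" using l assms(2) by (simp add: card_cart_basis)
  have "{P \<in> pg_planes. l \<subseteq> P} = {P. vec.subspace P \<and> vec.dim P = 2 + 1 \<and> l \<subseteq> P}"
    by (auto simp: pg_planes_def)
  then have "card {P \<in> pg_planes. l \<subseteq> P} * (CARD('a) ^ 3 - CARD('a) ^ 2) = CARD('a) ^ (n + 1) - CARD('a) ^ 2"
    using card_superspaces_Suc_dim[OF l] assms(2) by simp
  then have "real (card {P \<in> pg_planes. l \<subseteq> P} * (CARD('a) ^ 3 - CARD('a) ^ 2))
               = real (CARD('a) ^ (n + 1) - CARD('a) ^ 2)"
    by (rule arg_cong)
  moreover have "real (CARD('a) ^ 3 - CARD('a) ^ 2) = Q ^ 3 - Q ^ 2"
    unfolding Q_def by (rule of_nat_power_diff[OF q]) simp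
  moreover have "real (CARD('a) ^ (n + 1) - CARD('a) ^ 2) = Q ^ (n + 1) - Q ^ 2"
    unfolding Q_def by (rule of_nat_power_diff[OF q n1])
  ultimately have "real (card {P \<in> pg_planes. l \<subseteq> P}) * (Q ^ 3 - Q ^ 2) = Q ^ (n + 1) - Q ^ 2"
    by (simp only: of_nat_mult)
  moreover have "Q ^ 3 - Q ^ 2 = Q^2 * (Q - 1)" by algebra
  moreover have "n + 1 = 2 + (n - 1)" using n1 by simp
  then have "Q ^ (n + 1) - Q ^ 2 = Q^2 * (Q ^ (n - 1) - 1)"
    by (simp only: power_add right_diff_distrib mult_1_right)
  ultimately have "Q^2 * (real (card {P \<in> pg_planes. l \<subseteq> P}) * (Q - 1)) = Q^2 * (Q ^ (n - 1) - 1)"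
    by (simp add: ac_simps)
  then show ?thesis using Q unfolding Q_def by simp
qed

lemma real_card_pg_planes:
  assumes "CARD('n) = n + 1" "n \<ge> 2"
  shows "real (card (pg_planes :: ('a::{field,finite} ^ 'n) set set))
           * ((real CARD('a) - 1) ^ 3 * (real CARD('a) + 1) * (real CARD('a) ^ 2 + real CARD('a) + 1))
         = (real CARD('a) ^ (n + 1) - 1) * (real CARD('a) ^ n - 1) * (real CARD('a) ^ (n - 1) - 1)"
proof -
  define Q where "Q = real CARD('a)"
  define x where "x = Q ^ (n - 1)"
  have Q: "Q \<ge> 2" unfolding Q_def using two_le_card_field[where 'a='a] by simp
  have pw: "Q ^ (n + 1) = Q^2 * x" "Q ^ n = Q * x"
    unfolding x_def using power_split_two[OF assms(2)] by simp_all
  have "pg_planes = subspaces_of_dim (UNIV :: ('a ^ 'n) set) 3"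
    by (auto simp: pg_planes_def subspaces_of_dim_def)
  then have count: "real (card (pg_planes :: ('a ^ 'n) set set)) * ((Q^3 - 1) * (Q^3 - Q) * (Q^3 - Q^2))
               = (Q^2 * x - 1) * (Q^2 * x - Q) * (Q^2 * x - Q^2)"
    using real_card_subspaces_of_dim[of "UNIV :: ('a ^ 'n) set" 3] assms
    unfolding Q_def pw[unfolded Q_def, symmetric]
    by (simp add: card_cart_basis lessThan_nat_numeral mult_ac)
  have "(Q^3 - 1) * (Q^3 - Q) * (Q^3 - Q^2) = Q^3 * ((Q - 1)^3 * (Q + 1) * (Q^2 + Q + 1))"
    by algebra
  moreover have "(Q^2 * x - 1) * (Q^2 * x - Q) * (Q^2 * x - Q^2) = Q^3 * ((Q^2 * x - 1) * (Q * x - 1) * (x - 1))"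
    by algebra
  ultimately have "Q^3 * (real (card (pg_planes :: ('a ^ 'n) set set)) * ((Q - 1)^3 * (Q + 1) * (Q^2 + Q + 1)))
                     = Q^3 * ((Q^2 * x - 1) * (Q * x - 1) * (x - 1))"
    using count by (metis mult.left_commute)
  then have "real (card (pg_planes :: ('a ^ 'n) set set)) * ((Q - 1)^3 * (Q + 1) * (Q^2 + Q + 1))
               = (Q^2 * x - 1) * (Q * x - 1) * (x - 1)"
    using Q by simp
  then show ?thesis unfolding Q_def[symmetric] x_def[symmetric] pw .
qed

lemma dim_inter_pg_lines_le:
  assumes "l1 \<in> pg_lines" "l2 \<in> pg_lines" "l1 \<noteq> l2"
  shows "vec.dim (l1 \<inter> l2) \<le> 1"
proof (rule ccontr)
  have l: "vec.subspace l1" "vec.dim l1 = 2" "vec.subspace l2" "vec.dim l2 = 2"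
    using assms by (auto simp: pg_lines_def)
  assume "\<not> ?thesis"
  moreover have "vec.dim (l1 \<inter> l2) \<le> 2" using vec.dim_subset[of "l1 \<inter> l2" l1] l by auto
  ultimately have d: "vec.dim (l1 \<inter> l2) = 2" by linarith
  have I: "vec.subspace (l1 \<inter> l2)" using l by (simp add: vec.subspace_inter)
  have "l1 \<inter> l2 = l1" by (rule vec.subspace_dim_equal) (use l I d in auto)
  moreover have "l1 \<inter> l2 = l2" by (rule vec.subspace_dim_equal) (use l I d in auto)
  ultimately show False using assms(3) by simp
qed

lemma meeting_pg_lines_coplanar:
  assumes "l1 \<in> pg_lines" "l2 \<in> pg_lines" "l1 \<noteq> l2" "v \<in> l1 \<inter> l2" "v \<noteq> 0"
  shows "\<exists>P\<in>pg_planes. l1 \<subseteq> P \<and> l2 \<subseteq> P"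
proof -
  let ?X = "{x + y |x y. x \<in> l1 \<and> y \<in> l2}"
  have l: "vec.subspace l1" "vec.dim l1 = 2" "vec.subspace l2" "vec.dim l2 = 2"
    using assms by (auto simp: pg_lines_def)
  have "vec.dim (l1 \<inter> l2) \<noteq> 0" using assms(4,5) by auto
  then have "vec.dim (l1 \<inter> l2) = 1" using dim_inter_pg_lines_le[OF assms(1-3)] by linarith
  then have "vec.dim ?X = 3" using vec.dim_sums_Int[OF l(1) l(3)] l by simp
  moreover have "l1 \<subseteq> ?X"
    using vec.subspace_0[OF l(3)] by (force intro: exI[of _ 0])
  moreover have "l2 \<subseteq> ?X"
    using vec.subspace_0[OF l(1)] by force
  ultimately show ?thesis
    using vec.subspace_sums[OF l(1) l(3)] unfolding pg_planes_def by blast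
qed

lemma card_inter_pg_lines_le:
  fixes l1 l2 :: "('a::{field,finite} ^ 'n) set"
  assumes "l1 \<in> pg_lines" "l2 \<in> pg_lines" "l1 \<noteq> l2"
  shows "card (l1 \<inter> l2 - {0}) \<le> (CARD('a) - 1) * card {P \<in> pg_planes. l1 \<subseteq> P \<and> l2 \<subseteq> P}"
proof (cases "l1 \<inter> l2 - {0} = {}")
  case True
  then show ?thesis by (metis card.empty zero_le)
next
  case False
  then obtain v where v: "v \<in> l1 \<inter> l2" "v \<noteq> 0" by blast
  have I: "vec.subspace (l1 \<inter> l2)"
    using assms by (auto simp: pg_lines_def intro: vec.subspace_inter)
  have "card (l1 \<inter> l2) \<le> CARD('a) ^ 1"
    unfolding card_subspace[OF I] using dim_inter_pg_lines_le[OF assms]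
    by (intro power_increasing) auto
  then have "card (l1 \<inter> l2 - {0}) \<le> CARD('a) - 1"
    using vec.subspace_0[OF I] by (simp add: card_Diff_singleton)
  moreover have "{P \<in> pg_planes. l1 \<subseteq> P \<and> l2 \<subseteq> P} \<noteq> {}"
    using meeting_pg_lines_coplanar[OF assms v] by blast
  then have "1 \<le> card {P \<in> pg_planes. l1 \<subseteq> P \<and> l2 \<subseteq> P}"
    by (simp add: Suc_le_eq card_gt_0_iff)
  then have "CARD('a) - 1 \<le> (CARD('a) - 1) * card {P \<in> pg_planes. l1 \<subseteq> P \<and> l2 \<subseteq> P}"
    using mult_le_mono2[of 1 _ "CARD('a) - 1"] by simp
  ultimately show ?thesis by (rule le_trans)
qed

section \<open>Double counting incidences\<close>

lemma sum_card_swap: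
  assumes "finite A" "finite B"
  shows "(\<Sum>x\<in>A. card {y \<in> B. R x y}) = (\<Sum>y\<in>B. card {x \<in> A. R x y})"
  using sum.swap_restrict[OF assms, of "\<lambda>_ _. 1 :: nat" R] by simp

lemma card_distinct_pairs:
  assumes "finite A"
  shows "card {(x, y). x \<in> A \<and> y \<in> A \<and> x \<noteq> y} = card A * (card A - 1)"
proof -
  have "{(x, y). x \<in> A \<and> y \<in> A \<and> x \<noteq> y} = A \<times> A - (\<lambda>x. (x, x)) ` A" by auto
  moreover have "card (A \<times> A - (\<lambda>x. (x, x)) ` A) = card A * card A - card A"
    using card_Diff_subset[of "(\<lambda>x. (x, x)) ` A" "A \<times> A"] assms
    by (auto simp: card_cartesian_product card_image inj_on_def)
  ultimately show ?thesis by (simp add: diff_mult_distrib2)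
qed

lemma sum_card_distinct_pairs_swap:
  assumes "finite A" "finite B"
  shows "(\<Sum>x\<in>A. card {y \<in> B. R x y} * (card {y \<in> B. R x y} - 1))
           = (\<Sum>(y, z)\<in>{(y, z). y \<in> B \<and> z \<in> B \<and> y \<noteq> z}. card {x \<in> A. R x y \<and> R x z})"
proof -
  let ?D = "{(y, z). y \<in> B \<and> z \<in> B \<and> y \<noteq> z}"
  have "card {y \<in> B. R x y} * (card {y \<in> B. R x y} - 1) = card {p \<in> ?D. R x (fst p) \<and> R x (snd p)}" for x
  proof -
    have "{p \<in> ?D. R x (fst p) \<and> R x (snd p)}
            = {(y, z). y \<in> {y \<in> B. R x y} \<and> z \<in> {y \<in> B. R x y} \<and> y \<noteq> z}"
      by auto
    then show ?thesis using card_distinct_pairs[of "{y \<in> B. R x y}"] assms(2) by simp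
  qed
  then have "(\<Sum>x\<in>A. card {y \<in> B. R x y} * (card {y \<in> B. R x y} - 1))
               = (\<Sum>x\<in>A. card {p \<in> ?D. R x (fst p) \<and> R x (snd p)})"
    by simp
  also have "\<dots> = (\<Sum>p\<in>?D. card {x \<in> A. R x (fst p) \<and> R x (snd p)})"
    using assms by (intro sum_card_swap) (auto intro: finite_subset[of _ "B \<times> B"])
  finally show ?thesis by (simp add: case_prod_beta)
qed

text \<open>Points are represented by nonzero vectors, so every projective point is counted \<open>q - 1\<close>
  times below.\<close>

lemma sum_card_lines_through_points:
  fixes L :: "('a::{field,finite} ^ 'n) set set"
  assumes "L \<subseteq> pg_lines"
  shows "(\<Sum>v\<in>-{0}. card {l \<in> L. v \<in> l}) = card L * (CARD('a) ^ 2 - 1)"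
proof -
  have "(\<Sum>v\<in>-{0}. card {l \<in> L. v \<in> l}) = (\<Sum>l\<in>L. card {v \<in> -{0}. v \<in> l})"
    by (rule sum_card_swap) simp_all
  also have "\<dots> = (\<Sum>l\<in>L. CARD('a) ^ 2 - 1)"
  proof (rule sum.cong[OF refl])
    fix l assume "l \<in> L"
    then have l: "vec.subspace l" "vec.dim l = 2" using assms by (auto simp: pg_lines_def)
    have "{v \<in> -{0}. v \<in> l} = l - {0}" by auto
    then show "card {v \<in> -{0}. v \<in> l} = CARD('a) ^ 2 - 1"
      using card_subspace[OF l(1)] l(2) vec.subspace_0[OF l(1)] by (simp add: card_Diff_singleton)
  qed
  finally show ?thesis by simp
qed

lemma sum_card_lines_in_planes:
  fixes L :: "('a::{field,finite} ^ 'n) set set"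
  assumes "L \<subseteq> pg_lines" "CARD('n) = n + 1"
  shows "(\<Sum>P\<in>pg_planes. real (card {l \<in> L. l \<subseteq> P})) * (real CARD('a) - 1)
           = real (card L) * (real CARD('a) ^ (n - 1) - 1)"
proof -
  have "(\<Sum>P\<in>pg_planes. card {l \<in> L. l \<subseteq> P}) = (\<Sum>l\<in>L. card {P \<in> pg_planes. l \<subseteq> P})"
    by (rule sum_card_swap) simp_all
  then have "(\<Sum>P\<in>pg_planes. real (card {l \<in> L. l \<subseteq> P})) * (real CARD('a) - 1)
               = (\<Sum>l\<in>L. real (card {P \<in> pg_planes. l \<subseteq> P}) * (real CARD('a) - 1))"
    by (metis (no_types) of_nat_sum sum_distrib_right)
  also have "\<dots> = (\<Sum>l\<in>L. real CARD('a) ^ (n - 1) - 1)"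
    using real_card_planes_through_line assms by (intro sum.cong) auto
  finally show ?thesis by simp
qed

lemma sum_pairs_through_points_le:
  fixes L :: "('a::{field,finite} ^ 'n) set set"
  assumes "L \<subseteq> pg_lines"
  shows "(\<Sum>v\<in>-{0}. card {l \<in> L. v \<in> l} * (card {l \<in> L. v \<in> l} - 1))
           \<le> (CARD('a) - 1) * (\<Sum>P\<in>pg_planes. card {l \<in> L. l \<subseteq> P} * (card {l \<in> L. l \<subseteq> P} - 1))"
proof -
  let ?D = "{(l1, l2). l1 \<in> L \<and> l2 \<in> L \<and> l1 \<noteq> l2}"
  have "(\<Sum>v\<in>-{0}. card {l \<in> L. v \<in> l} * (card {l \<in> L. v \<in> l} - 1))
          = (\<Sum>(l1, l2)\<in>?D. card {v \<in> -{0}. v \<in> l1 \<and> v \<in> l2})"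
    by (rule sum_card_distinct_pairs_swap) simp_all
  also have "\<dots> \<le> (\<Sum>(l1, l2)\<in>?D. (CARD('a) - 1) * card {P \<in> pg_planes. l1 \<subseteq> P \<and> l2 \<subseteq> P})"
  proof (rule sum_mono, clarify)
    fix l1 l2 assume "l1 \<in> L" "l2 \<in> L" "l1 \<noteq> l2"
    moreover have "{v \<in> -{0}. v \<in> l1 \<and> v \<in> l2} = l1 \<inter> l2 - {0}" by auto
    ultimately show "card {v \<in> -{0}. v \<in> l1 \<and> v \<in> l2}
                       \<le> (CARD('a) - 1) * card {P \<in> pg_planes. l1 \<subseteq> P \<and> l2 \<subseteq> P}"
      using card_inter_pg_lines_le[of l1 l2] assms by auto
  qed
  also have "\<dots> = (CARD('a) - 1) * (\<Sum>P\<in>pg_planes. card {l \<in> L. l \<subseteq> P} * (card {l \<in> L. l \<subseteq> P} - 1))"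
    by (subst sum_card_distinct_pairs_swap) (simp_all add: sum_distrib_left split_def)
  finally show ?thesis .
qed

section \<open>The quadratic inequality\<close>

lemma smaller_root_le:
  fixes q x lam :: real
  assumes q: "q \<ge> 2" and x: "x \<ge> 1"
    and "(lam * (q^2 - 1)^2 - (q^2 * x - 1) * (x - 1))
           * (lam * (q^2 - 1)^2 - (q^2 * x - 1) * ((q + 1) * (q * x - 1))) \<le> 0"
  shows "(q^2 * x - 1) * (x - 1) \<le> lam * (q^2 - 1)^2"
proof (rule ccontr)
  assume "\<not> ?thesis"
  then have below_small: "lam * (q^2 - 1)^2 - (q^2 * x - 1) * (x - 1) < 0" by simp
  have "(q + 1) * (q * x - 1) - (x - 1) = (q^2 + q - 1) * (x - 1) + (q^2 - 1)" by algebra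
  moreover have "q^2 \<ge> 2^2" using q by (intro power_mono) simp_all
  then have "q^2 \<ge> 1" "0 \<le> (q^2 + q - 1) * (x - 1)" using q x by simp_all
  ultimately have "x - 1 \<le> (q + 1) * (q * x - 1)" by linarith
  moreover have "q^2 * x \<ge> 1 * 1" using \<open>q^2 \<ge> 1\<close> x by (rule mult_mono) simp_all
  ultimately have "(q^2 * x - 1) * (x - 1) \<le> (q^2 * x - 1) * ((q + 1) * (q * x - 1))"
    by (intro mult_left_mono) simp_all
  then have "0 < (lam * (q^2 - 1)^2 - (q^2 * x - 1) * (x - 1))
                   * (lam * (q^2 - 1)^2 - (q^2 * x - 1) * ((q + 1) * (q * x - 1)))"
    using below_small by (intro mult_neg_neg) simp_all
  then show False using assms(3) by simp
qed

lemma sum_mult_pred_le: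
  fixes c :: "'a \<Rightarrow> real"
  assumes "\<And>P. P \<in> A \<Longrightarrow> 1 \<le> c P \<and> c P \<le> s"
  shows "s * card A \<le> s * (\<Sum>P\<in>A. c P) - (\<Sum>P\<in>A. c P * (c P - 1))"
proof -
  have "s \<le> s * c P - c P * (c P - 1)" if "P \<in> A" for P
  proof -
    have "0 \<le> (c P - 1) * (s - c P)" using assms[OF that] by simp
    then show ?thesis by (simp add: algebra_simps)
  qed
  then have "(\<Sum>P\<in>A. s) \<le> (\<Sum>P\<in>A. s * c P - c P * (c P - 1))" by (rule sum_mono)
  then show ?thesis by (simp add: sum_subtractf sum_distrib_left mult.commute)
qed

text \<open>In the application \<open>Pl\<close> is the set of planes, \<open>N\<close> the set of nonzero vectors,
  \<open>lam\<close> the size of a line set covering all planes, \<open>c P\<close> and \<open>d v\<close> the numbers of its lines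
  in \<open>P\<close> and through \<open>v\<close>, and \<open>x = q^(n - 1)\<close>.\<close>

lemma incidence_quadratic_bound:
  fixes q x lam :: real and c :: "'p \<Rightarrow> real" and d :: "'v \<Rightarrow> real"
  assumes q: "q \<ge> 2" and x: "x \<ge> 1"
    and c_bounds: "\<And>P. P \<in> Pl \<Longrightarrow> 1 \<le> c P \<and> c P \<le> q^2 + q + 1"
    and sum_c: "(\<Sum>P\<in>Pl. c P) * (q - 1) = lam * (x - 1)"
    and sum_d: "(\<Sum>v\<in>N. d v) = lam * (q^2 - 1)"
    and pairs: "(\<Sum>v\<in>N. d v * (d v - 1)) \<le> (q - 1) * (\<Sum>P\<in>Pl. c P * (c P - 1))"
    and card_N: "real (card N) = q^2 * x - 1"
    and card_Pl: "real (card Pl) * ((q - 1)^3 * (q + 1) * (q^2 + q + 1)) = (q^2 * x - 1) * (q * x - 1) * (x - 1)"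
  shows "(q^2 * x - 1) * (x - 1) \<le> lam * (q^2 - 1)^2"
proof (rule smaller_root_le[OF q x])
  define s where "s = q^2 + q + 1"
  define M where "M = q^2 * x - 1"
  define C where "C = (\<Sum>P\<in>Pl. c P)"
  define S2 where "S2 = (\<Sum>P\<in>Pl. c P * (c P - 1))"
  define D where "D = (\<Sum>v\<in>N. d v)"
  define E where "E = (\<Sum>v\<in>N. (d v)^2)"
  have "1 \<le> q^2" by (rule one_le_power) (use q in simp)
  then have "q^2 * x \<ge> 1 * 1" using x by (intro mult_mono) simp_all
  then have M: "M \<ge> 0" unfolding M_def by simp
  have per_plane: "s * card Pl \<le> s * C - S2"
    unfolding C_def S2_def s_def by (rule sum_mult_pred_le) (use c_bounds in blast)
  have cauchy_schwarz: "D^2 \<le> M * E"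
    using Cauchy_Schwarz_ineq_sum[of d "\<lambda>_. 1" N] card_N unfolding D_def E_def M_def by (simp add: mult.commute)
  have "E - D \<le> (q - 1) * S2"
    using pairs unfolding E_def D_def S2_def by (simp add: algebra_simps power2_eq_square sum_subtractf)
  then have "M * E - M * D \<le> M * ((q - 1) * S2)"
    using M by (metis mult_left_mono right_diff_distrib)
  moreover have "(q - 1) * M * (s * card Pl) \<le> (q - 1) * M * (s * C - S2)"
    using per_plane q M by (intro mult_left_mono) simp_all
  moreover have "(q - 1) * M * (s * C - S2) = M * s * (C * (q - 1)) - M * ((q - 1) * S2)"
    by (simp add: algebra_simps)
  ultimately have main: "(q - 1) * M * (s * card Pl) \<le> M * s * lam * (x - 1) - D^2 + M * D"
    using cauchy_schwarz sum_c unfolding C_def by (simp add: mult.assoc)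
  have "(q^2 - 1)^2 * ((q - 1) * M * (s * card Pl)) \<le> (q^2 - 1)^2 * (M * s * lam * (x - 1) - D^2 + M * D)"
    using main by (rule mult_left_mono) simp
  moreover have "(q^2 - 1)^2 * ((q - 1) * M * (s * card Pl))
                   = (q + 1) * M * (real (card Pl) * ((q - 1)^3 * (q + 1) * (q^2 + q + 1)))"
    unfolding s_def by algebra
  moreover have "(lam * (q^2 - 1)^2 - (q^2 * x - 1) * (x - 1))
                   * (lam * (q^2 - 1)^2 - (q^2 * x - 1) * ((q + 1) * (q * x - 1)))
                 = (q + 1) * M * ((q^2 * x - 1) * (q * x - 1) * (x - 1))
                   - (q^2 - 1)^2 * (M * s * lam * (x - 1) - D^2 + M * D)"
    unfolding D_def sum_d s_def M_def by algebra
  ultimately show "(lam * (q^2 - 1)^2 - (q^2 * x - 1) * (x - 1))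
                     * (lam * (q^2 - 1)^2 - (q^2 * x - 1) * ((q + 1) * (q * x - 1))) \<le> 0"
    unfolding card_Pl by linarith
qed

lemma of_nat_mult_pred: "(of_nat (k * (k - 1)) :: 'b::comm_ring_1) = of_nat k * (of_nat k - 1)"
  by (cases k) (simp_all add: algebra_simps)

lemma card_covering_lines_bound:
  fixes L :: "('a::{field,finite} ^ 'n) set set"
  assumes n: "n \<ge> 2" "CARD('n) = n + 1"
    and L: "L \<subseteq> pg_lines" "\<forall>P\<in>pg_planes. \<exists>l\<in>L. l \<subseteq> P"
  shows "(real CARD('a) ^ (n + 1) - 1) * (real CARD('a) ^ (n - 1) - 1)
           \<le> real (card L) * (real CARD('a) ^ 2 - 1) ^ 2"
proof -
  define Q where "Q = real CARD('a)"
  define c where "c P = real (card {l \<in> L. l \<subseteq> P})" for P :: "('a ^ 'n) set"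
  define d where "d v = real (card {l \<in> L. v \<in> l})" for v :: "'a ^ 'n"
  have q: "2 \<le> CARD('a)" by (rule two_le_card_field)
  have pw: "Q ^ (n + 1) = Q^2 * Q ^ (n - 1)" "Q ^ n = Q * Q ^ (n - 1)"
    using power_split_two[OF n(1)] by simp_all
  have "(Q^2 * Q ^ (n - 1) - 1) * (Q ^ (n - 1) - 1) \<le> real (card L) * (Q^2 - 1)^2"
  proof (rule incidence_quadratic_bound[where Pl = pg_planes and N = "-{0}" and c = c and d = d])
    show "2 \<le> Q" "1 \<le> Q ^ (n - 1)" using q unfolding Q_def by simp_all
    show "1 \<le> c P \<and> c P \<le> Q^2 + Q + 1" if "P \<in> pg_planes" for P
    proof
      show "1 \<le> c P"
        using L(2) that unfolding c_def by (simp add: Suc_le_eq card_gt_0_iff) blast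
      have "card {l \<in> L. l \<subseteq> P} \<le> card {l \<in> pg_lines. l \<subseteq> P}"
        using L(1) by (intro card_mono) auto
      then have "real (card {l \<in> L. l \<subseteq> P}) \<le> real (CARD('a) ^ 2 + CARD('a) + 1)"
        unfolding card_lines_in_plane[OF that] by (rule of_nat_mono)
      then show "c P \<le> Q^2 + Q + 1"
        unfolding c_def Q_def by simp
    qed
    show "(\<Sum>P\<in>pg_planes. c P) * (Q - 1) = real (card L) * (Q ^ (n - 1) - 1)"
      unfolding c_def Q_def using sum_card_lines_in_planes[OF L(1) n(2)] .
    show "(\<Sum>v\<in>-{0}. d v) = real (card L) * (Q^2 - 1)"
      using arg_cong[OF sum_card_lines_through_points[OF L(1)], of real] q
      unfolding d_def Q_def by (simp add: of_nat_diff)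
    show "(\<Sum>v\<in>-{0}. d v * (d v - 1)) \<le> (Q - 1) * (\<Sum>P\<in>pg_planes. c P * (c P - 1))"
    proof -
      have "real (CARD('a) - 1) = Q - 1" using q unfolding Q_def by (simp add: of_nat_diff)
      then show ?thesis
        using of_nat_mono[OF sum_pairs_through_points_le[OF L(1)], where 'a=real]
        unfolding c_def d_def of_nat_mult[of "CARD('a) - 1"] of_nat_sum of_nat_mult_pred by simp
    qed
    have "real (card (-{0 :: 'a ^ 'n})) = Q ^ (n + 1) - 1"
      using n(2) q unfolding Q_def by (simp add: Compl_eq_Diff_UNIV card_Diff_singleton of_nat_diff)
    then show "real (card (-{0 :: 'a ^ 'n})) = Q^2 * Q ^ (n - 1) - 1"
      unfolding pw .
    show "real (card (pg_planes :: ('a ^ 'n) set set)) * ((Q - 1)^3 * (Q + 1) * (Q^2 + Q + 1))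
            = (Q^2 * Q ^ (n - 1) - 1) * (Q * Q ^ (n - 1) - 1) * (Q ^ (n - 1) - 1)"
      using real_card_pg_planes[OF n(2,1), where 'a='a] unfolding Q_def[symmetric] pw .
  qed
  then show ?thesis unfolding Q_def[symmetric] pw .
qed

lemma f_PG_attained:
  obtains L :: "('a::{field,finite} ^ 'n) set set"
  where "L \<subseteq> pg_lines" "\<forall>P\<in>pg_planes. \<exists>l\<in>L. l \<subseteq> P" "card L = f_PG TYPE('a) TYPE('n)"
proof -
  have cover_all: "\<forall>P\<in>pg_planes. \<exists>l\<in>pg_lines. l \<subseteq> (P :: ('a ^ 'n) set)"
  proof
    fix P :: "('a ^ 'n) set" assume "P \<in> pg_planes"
    then have "card {l \<in> pg_lines. l \<subseteq> P} > 0" by (simp add: card_lines_in_plane)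
    then have "{l \<in> pg_lines. l \<subseteq> P} \<noteq> {}" by (metis card.empty less_irrefl)
    then show "\<exists>l\<in>pg_lines. l \<subseteq> P" by blast
  qed
  have "\<exists>L. L \<subseteq> (pg_lines :: ('a ^ 'n) set set) \<and> (\<forall>P\<in>pg_planes. \<exists>l\<in>L. l \<subseteq> P)
          \<and> card L = f_PG TYPE('a) TYPE('n)"
    unfolding f_PG_def
    by (rule LeastI[of _ "card (pg_lines :: ('a ^ 'n) set set)"], rule exI[of _ pg_lines])
      (use cover_all in simp)
  then show ?thesis using that by blast
qed

theorem lemma4p3:
  fixes n q :: nat
  assumes "n \<ge> 2"
    and "CARD('n::finite) = n + 1"
    and "CARD('a::{field,finite}) = q"
  shows "real (f_PG TYPE('a) TYPE('n))
           \<ge> ((real q ^ (n + 1) - 1) * (real q ^ (n - 1) - 1)) / (real q ^ 2 - 1) ^ 2"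
proof -
  obtain L :: "('a ^ 'n) set set"
    where L: "L \<subseteq> pg_lines" "\<forall>P\<in>pg_planes. \<exists>l\<in>L. l \<subseteq> P" "card L = f_PG TYPE('a) TYPE('n)"
    by (rule f_PG_attained)
  have "real q ^ 2 \<ge> 2 ^ 2"
    using two_le_card_field[where 'a='a] assms(3) by (intro power_mono) simp_all
  then have pos: "(real q ^ 2 - 1) ^ 2 > 0" by simp
  have "(real q ^ (n + 1) - 1) * (real q ^ (n - 1) - 1) \<le> real (f_PG TYPE('a) TYPE('n)) * (real q ^ 2 - 1) ^ 2"
    using card_covering_lines_bound[OF assms(1,2) L(1,2)] unfolding L(3) assms(3) .
  then show ?thesis by (simp only: pos_divide_le_eq[OF pos])
qed

end
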